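(* Let $\alpha>0$, $\beta_m>\alpha$, $\tau=1/(\beta_m-\alpha)$ and $$\beta(t)=\alpha+\frac{1/\tau}{1+t/\tau}.$$ Let $S_0>0$, $I_0>0$ and let $(S(t),I(t),R(t))$ be the solution of $$\dot S=-\frac{\beta(t)SI}{S+I},\qquad \dot I=\frac{\beta(t)SI}{S+I}-\alpha I,\qquad \dot R=\alpha I$$ with $S(0)=S_0$, $I(0)=I_0$. Then for $t\ge 0$, $$S(t)=S_0\left(\frac{S_0+I_0}{S_0+I_0(1+t/\tau)}\right)^{1-\frac{S_0}{I_0}\alpha\tau}e^{-\alpha t},\qquad I(t)=I_0\left(1+\frac t\tau\right)\left(\frac{S_0+I_0}{S_0+I_0(1+t/\tau)}\right)^{1-\frac{S_0}{I_0}\alpha\tau}e^{-\alpha t},$$ and the maximum of $I(t)$ occurs at $$t_{\mathrm{peak}}=\tau\left(\sqrt{\frac{S_0}{I_0\alpha\tau}}-1\right).$$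
   Context: Modified SIR epidemiological model with constant recovery rate $\alpha$ and time-dependent transmission rate $\beta(t)$, here monotonically decreasing from $\beta_m$ at $t=0$ towards $\alpha$. *)

theory Defs
  imports Complex_Main
begin

definition sir_tau :: "real \<Rightarrow> real \<Rightarrow> real" where
  "sir_tau \<alpha> \<beta>m = 1 / (\<beta>m - \<alpha>)"

definition sir_beta :: "real \<Rightarrow> real \<Rightarrow> real \<Rightarrow> real" where
  "sir_beta \<alpha> \<beta>m t = \<alpha> + (1 / sir_tau \<alpha> \<beta>m) / (1 + t / sir_tau \<alpha> \<beta>m)"

end

theory Submission
  imports Defs "HOL-Analysis.Analysis"
begin

(* Writing beta(t) = alpha + 1/(tau + t), the quotient I / (S (tau + t)) is a first integral of the
   system, so I is the explicit multiple I0 (tau + t) / (S0 tau) of S.  Substituting this into the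
   S-equation leaves the linear equation S' = - lambda(t) S with an explicit force of infection
   lambda, whose solution is the closed form.
   Both identities need S, I > 0; a first-exit-time argument propagates positivity from t = 0,
   since on [0, b] the solution agrees with the positive closed form.  Finally
   I' = I (S0 tau - alpha I0 (tau + t)^2) / ((tau + t) (S0 tau + I0 (tau + t))), which changes sign
   exactly at t_peak. *)

lemma sir_beta_eq:
  assumes "\<beta>m \<noteq> \<alpha>"
  shows "sir_beta \<alpha> \<beta>m t = \<alpha> + 1 / (sir_tau \<alpha> \<beta>m + t)"
  using assms by (simp add: sir_beta_def sir_tau_def field_simps)

lemma ratio_constant_if_wronskian_zero:
  fixes f g f' g' :: "real \<Rightarrow> real"
  assumes "convex A" "a \<in> A" "b \<in> A"
    and f: "\<And>x. x \<in> A \<Longrightarrow> (f has_real_derivative f' x) (at x within A)"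
    and g: "\<And>x. x \<in> A \<Longrightarrow> (g has_real_derivative g' x) (at x within A)"
    and g_nonzero: "\<And>x. x \<in> A \<Longrightarrow> g x \<noteq> 0"
    and wronskian: "\<And>x. x \<in> A \<Longrightarrow> f' x * g x = f x * g' x"
  shows "f b / g b = f a / g a"
proof -
  have "((\<lambda>x. f x / g x) has_real_derivative 0) (at x within A)" if "x \<in> A" for x
    using DERIV_divide[OF f[OF that] g[OF that] g_nonzero[OF that]] wronskian[OF that] by simp
  then obtain c where "\<forall>x\<in>A. f x / g x = c"
    using has_field_derivative_zero_constant[OF \<open>convex A\<close>] by blast
  then show ?thesis using \<open>a \<in> A\<close> \<open>b \<in> A\<close> by simp
qed

lemma positive_by_continuation:
  fixes u v :: "real \<Rightarrow> real"
  assumes u_cont: "continuous_on {a..} u" and v_cont: "continuous_on {a..} v"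
    and v_pos: "\<And>t. t \<ge> a \<Longrightarrow> v t > 0" and "u a > 0"
    and agree: "\<And>b. b \<ge> a \<Longrightarrow> \<forall>s\<in>{a..b}. u s > 0 \<Longrightarrow> u b = v b"
    and "t \<ge> a"
  shows "u t > 0"
proof (rule ccontr)
  assume "\<not> u t > 0"
  define Z where "Z = {a..} \<inter> u -` {..0}"
  have "t \<in> Z" using \<open>t \<ge> a\<close> \<open>\<not> u t > 0\<close> by (simp add: Z_def)
  have "closed Z" unfolding Z_def by (rule continuous_closed_preimage[OF u_cont]) auto
  have "bdd_below Z" unfolding Z_def by (rule bdd_belowI[of _ a]) auto
  define t1 where "t1 = Inf Z"
  have "t1 \<in> Z" unfolding t1_def using \<open>t \<in> Z\<close> \<open>closed Z\<close> \<open>bdd_below Z\<close>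
    by (intro closed_contains_Inf) auto
  then have "a < t1" "u t1 \<le> 0" using \<open>u a > 0\<close> by (auto simp: Z_def less_le)
  have pos_before: "u s > 0" if "a \<le> s" "s < t1" for s
  proof (rule ccontr)
    assume "\<not> u s > 0"
    then have "s \<in> Z" using that by (simp add: Z_def)
    then have "t1 \<le> s" unfolding t1_def using \<open>bdd_below Z\<close> by (rule cInf_lower)
    with that show False by simp
  qed
  have closure_eq: "closure {a..<t1} = {a..t1}" using \<open>a < t1\<close> by simp
  have "continuous_on (closure {a..<t1}) (\<lambda>s. u s - v s)"
    unfolding closure_eq using u_cont v_cont by (auto intro: continuous_on_diff continuous_on_subset)
  moreover have "u s - v s = 0" if "s \<in> {a..<t1}" for s
    using agree[of s] pos_before that by auto
  moreover have "t1 \<in> closure {a..<t1}" unfolding closure_eq using \<open>a < t1\<close> by simp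
  ultimately have "u t1 - v t1 = 0" by (rule continuous_constant_on_closure)
  with v_pos[of t1] \<open>a < t1\<close> \<open>u t1 \<le> 0\<close> show False by simp
qed

lemma le_at_derivative_sign_change:
  fixes f f' :: "real \<Rightarrow> real"
  assumes deriv: "\<And>x. x \<ge> a \<Longrightarrow> (f has_real_derivative f' x) (at x within {a..})"
    and increasing: "\<And>x. a < x \<Longrightarrow> x < p \<Longrightarrow> f' x \<ge> 0"
    and decreasing: "\<And>x. p < x \<Longrightarrow> f' x \<le> 0"
    and "a \<le> p" "a \<le> t"
  shows "f t \<le> f p"
proof -
  have cont: "continuous_on {a..} f" using deriv by (intro DERIV_continuous_on) auto
  have deriv_at: "(f has_real_derivative f' x) (at x)" if "a < x" for x
    using deriv[of x] that at_within_interior[of x "{a..}"] by simp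
  show ?thesis
  proof (cases "t \<le> p")
    case True
    show ?thesis
    proof (rule DERIV_nonneg_imp_increasing_open[OF True])
      show "continuous_on {t..p} f" using \<open>a \<le> t\<close> by (intro continuous_on_subset[OF cont]) auto
      fix x assume "t < x" "x < p"
      then show "\<exists>y. (f has_real_derivative y) (at x) \<and> 0 \<le> y"
        using deriv_at increasing \<open>a \<le> t\<close> by force
    qed
  next
    case False
    show ?thesis
    proof (rule DERIV_nonpos_imp_decreasing_open[of p t])
      show "continuous_on {p..t} f" using \<open>a \<le> p\<close> by (intro continuous_on_subset[OF cont]) auto
      show "p \<le> t" using False by simp
      fix x assume "p < x" "x < t"
      then show "\<exists>y. (f has_real_derivative y) (at x) \<and> y \<le> 0"
        using deriv_at decreasing \<open>a \<le> p\<close> by force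
    qed
  qed
qed

locale sir_hyperbolic_solution =
  fixes \<alpha> \<tau> S0 I0 :: real and S I :: "real \<Rightarrow> real"
  assumes tau_pos: "\<tau> > 0" and S0_pos: "S0 > 0" and I0_pos: "I0 > 0"
    and S_0: "S 0 = S0" and I_0: "I 0 = I0"
    and S_deriv: "\<And>t. t \<ge> 0 \<Longrightarrow> (S has_real_derivative
           - ((\<alpha> + 1 / (\<tau> + t)) * S t * I t / (S t + I t))) (at t within {0..})"
    and I_deriv: "\<And>t. t \<ge> 0 \<Longrightarrow> (I has_real_derivative
           (\<alpha> + 1 / (\<tau> + t)) * S t * I t / (S t + I t) - \<alpha> * I t) (at t within {0..})"
begin

(* beta(t) I / (S + I) once I is the multiple I0 (tau + t) / (S0 tau) of S *)
definition force_of_infection :: "real \<Rightarrow> real" where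
  "force_of_infection t = (\<alpha> * (\<tau> + t) + 1) * I0 / (S0 * \<tau> + I0 * (\<tau> + t))"

definition S_closed :: "real \<Rightarrow> real" where
  "S_closed t = S0 * ((S0 + I0) / (S0 + I0 * (1 + t / \<tau>)))
                  powr (1 - S0 / I0 * \<alpha> * \<tau>) * exp (- \<alpha> * t)"

definition I_closed :: "real \<Rightarrow> real" where
  "I_closed t = I0 * (1 + t / \<tau>) * ((S0 + I0) / (S0 + I0 * (1 + t / \<tau>)))
                  powr (1 - S0 / I0 * \<alpha> * \<tau>) * exp (- \<alpha> * t)"

lemma S_closed_0: "S_closed 0 = S0"
  using S0_pos I0_pos by (simp add: S_closed_def)

lemma S_closed_pos:
  assumes "t \<ge> 0"
  shows "S_closed t > 0"
proof -
  have "S0 + I0 * (1 + t / \<tau>) > 0" using S0_pos I0_pos tau_pos assms by (simp add: add_pos_nonneg)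
  then show ?thesis using S0_pos I0_pos by (simp add: S_closed_def)
qed

lemma I_closed_eq: "I_closed t = I0 * (\<tau> + t) / (S0 * \<tau>) * S_closed t"
  using S0_pos tau_pos by (simp add: I_closed_def S_closed_def field_simps)

lemma I_closed_pos: "t \<ge> 0 \<Longrightarrow> I_closed t > 0"
  using S_closed_pos I0_pos S0_pos tau_pos by (simp add: I_closed_eq add_pos_nonneg)

lemma S_closed_deriv:
  assumes "t \<ge> 0"
  shows "(S_closed has_real_derivative - force_of_infection t * S_closed t) (at t)"
proof -
  define e where "e = 1 - S0 / I0 * \<alpha> * \<tau>"
  define r where "r t = (S0 + I0) / (S0 + I0 * (1 + t / \<tau>))" for t
  define P where "P = S0 * \<tau> + I0 * (\<tau> + t)"
  have "P > 0" using S0_pos I0_pos tau_pos assms by (simp add: P_def add_pos_nonneg)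
  have "S0 + I0 * (1 + t / \<tau>) > 0" using S0_pos I0_pos tau_pos assms by (simp add: add_pos_nonneg)
  then have "r t > 0" using S0_pos I0_pos by (simp add: r_def)
  have "(r has_real_derivative - r t * I0 / P) (at t)"
    unfolding r_def P_def using \<open>S0 + I0 * (1 + t / \<tau>) > 0\<close> tau_pos
    by (auto intro!: derivative_eq_intros simp: field_simps power2_eq_square minus_divide_left)
  from DERIV_fun_powr[OF this \<open>r t > 0\<close>, of e]
  have powr: "((\<lambda>t. r t powr e) has_real_derivative - e * I0 / P * r t powr e) (at t)"
    using \<open>r t > 0\<close> \<open>P > 0\<close> by (simp add: powr_diff field_simps)
  have exp: "((\<lambda>t. exp (- \<alpha> * t)) has_real_derivative - \<alpha> * exp (- \<alpha> * t)) (at t)"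
    by (auto intro!: derivative_eq_intros)
  have S_closed_eq: "S_closed = (\<lambda>t. S0 * r t powr e * exp (- \<alpha> * t))"
    by (simp add: fun_eq_iff S_closed_def r_def e_def)
  have "(S_closed has_real_derivative
      S0 * (- e * I0 / P * r t powr e) * exp (- \<alpha> * t) + - \<alpha> * exp (- \<alpha> * t) * (S0 * r t powr e)) (at t)"
    unfolding S_closed_eq by (intro DERIV_mult DERIV_cmult powr exp)
  also have "S0 * (- e * I0 / P * r t powr e) * exp (- \<alpha> * t) + - \<alpha> * exp (- \<alpha> * t) * (S0 * r t powr e)
      = - ((e * I0 + \<alpha> * P) / P) * S_closed t"
    using \<open>P > 0\<close> by (simp add: S_closed_def r_def e_def field_simps)
  also have "(e * I0 + \<alpha> * P) / P = force_of_infection t"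
    using I0_pos by (simp add: force_of_infection_def e_def P_def field_simps)
  finally show ?thesis .
qed

lemma S_continuous: "continuous_on {0..} S"
  using S_deriv by (intro DERIV_continuous_on) auto

lemma I_continuous: "continuous_on {0..} I"
  using I_deriv by (intro DERIV_continuous_on) auto

lemma I_proportional_S_while_positive:
  assumes "b \<ge> 0" and pos: "\<forall>s\<in>{0..b}. S s > 0 \<and> I s > 0"
  shows "I b = I0 * (\<tau> + b) / (S0 * \<tau>) * S b"
proof -
  define F where "F s = (\<alpha> + 1 / (\<tau> + s)) * S s * I s / (S s + I s)" for s
  have "I b / (S b * (\<tau> + b)) = I 0 / (S 0 * (\<tau> + 0))"
  proof (rule ratio_constant_if_wronskian_zero[where f' = "\<lambda>s. F s - \<alpha> * I s"
        and g' = "\<lambda>s. - F s * (\<tau> + s) + S s"])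
    fix s assume s: "s \<in> {0..b}"
    show "(I has_real_derivative F s - \<alpha> * I s) (at s within {0..b})"
      unfolding F_def using s by (intro DERIV_subset[OF I_deriv]) auto
    have "(S has_real_derivative - F s) (at s within {0..b})"
      unfolding F_def using s by (intro DERIV_subset[OF S_deriv]) auto
    then show "((\<lambda>s. S s * (\<tau> + s)) has_real_derivative - F s * (\<tau> + s) + S s) (at s within {0..b})"
      by (auto intro!: derivative_eq_intros)
    have "S s > 0" "I s > 0" "\<tau> + s > 0" using pos s tau_pos by auto
    then show "S s * (\<tau> + s) \<noteq> 0" by simp
    define x where "x = S s * I s / (S s + I s)"
    define w where "w = 1 / (\<tau> + s)"
    have "w * (\<tau> + s) = 1" "x * (S s + I s) = S s * I s"
      using \<open>S s > 0\<close> \<open>I s > 0\<close> \<open>\<tau> + s > 0\<close> by (simp_all add: w_def x_def)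
    moreover have "F s = (\<alpha> + w) * x" by (simp add: F_def w_def x_def)
    ultimately show "(F s - \<alpha> * I s) * (S s * (\<tau> + s)) = I s * (- F s * (\<tau> + s) + S s)"
      by algebra
  qed (use \<open>b \<ge> 0\<close> in auto)
  moreover have "S b > 0" "\<tau> + b > 0" using pos \<open>b \<ge> 0\<close> tau_pos by auto
  ultimately have "I b * (S0 * \<tau>) = I0 * (S b * (\<tau> + b))"
    using S0_pos tau_pos by (simp add: S_0 I_0 frac_eq_eq)
  then show ?thesis
    using S0_pos tau_pos by (simp add: field_simps)
qed

lemma incidence_eq_force_of_infection:
  assumes "s \<ge> 0" "S s \<noteq> 0" and proportional: "I s = I0 * (\<tau> + s) / (S0 * \<tau>) * S s"
  shows "(\<alpha> + 1 / (\<tau> + s)) * S s * I s / (S s + I s) = force_of_infection s * S s"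
proof -
  define v where "v = \<tau> + s"
  define c where "c = I0 * v / (S0 * \<tau>)"
  define D where "D = S0 * \<tau> + I0 * v"
  have "v > 0" "c \<ge> 0" using assms S0_pos I0_pos tau_pos by (simp_all add: v_def c_def)
  then have "D > 0" using S0_pos I0_pos tau_pos by (simp add: D_def add_pos_pos)
  have I_eq: "I s = c * S s" using proportional by (simp add: c_def v_def)
  have "S s + c * S s = (1 + c) * S s" by (simp add: algebra_simps)
  then have "(\<alpha> + 1 / v) * S s * I s / (S s + I s) = (\<alpha> + 1 / v) * c / (1 + c) * S s"
    using \<open>S s \<noteq> 0\<close> \<open>c \<ge> 0\<close> unfolding I_eq by (simp add: power2_eq_square)
  also have "(\<alpha> + 1 / v) * c / (1 + c) = (\<alpha> + 1 / v) * (I0 * v / D)"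
  proof -
    have "1 + c = D / (S0 * \<tau>)" using S0_pos tau_pos by (simp add: c_def D_def field_simps)
    then show ?thesis using S0_pos tau_pos by (simp add: c_def)
  qed
  also have "\<dots> = (\<alpha> * v + 1) * I0 / D"
    using \<open>v > 0\<close> \<open>D > 0\<close> by (simp add: field_simps)
  also have "\<dots> = force_of_infection s"
    by (simp add: force_of_infection_def D_def v_def)
  finally show ?thesis unfolding v_def .
qed

lemma solution_eq_closed_while_positive:
  assumes "b \<ge> 0" and pos: "\<forall>s\<in>{0..b}. S s > 0 \<and> I s > 0"
  shows "S b = S_closed b \<and> I b = I_closed b"
proof -
  have "S b / S_closed b = S 0 / S_closed 0"
  proof (rule ratio_constant_if_wronskian_zero[where f' = "\<lambda>s. - force_of_infection s * S s"
        and g' = "\<lambda>s. - force_of_infection s * S_closed s"])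
    fix s assume s: "s \<in> {0..b}"
    have "s \<ge> 0" "S s \<noteq> 0" using s bspec[OF pos s] by auto
    moreover have "I s = I0 * (\<tau> + s) / (S0 * \<tau>) * S s"
      using s pos by (intro I_proportional_S_while_positive) auto
    ultimately have incidence:
        "(\<alpha> + 1 / (\<tau> + s)) * S s * I s / (S s + I s) = force_of_infection s * S s"
      by (rule incidence_eq_force_of_infection)
    have "(S has_real_derivative - force_of_infection s * S s) (at s within {0..})"
      using S_deriv[OF \<open>s \<ge> 0\<close>] unfolding incidence by simp
    then show "(S has_real_derivative - force_of_infection s * S s) (at s within {0..b})"
      by (rule DERIV_subset) auto
    show "(S_closed has_real_derivative - force_of_infection s * S_closed s) (at s within {0..b})"
      by (rule has_field_derivative_at_within[OF S_closed_deriv]) (use s in auto)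
    show "S_closed s \<noteq> 0" using S_closed_pos[of s] s by simp
  qed (use \<open>b \<ge> 0\<close> in auto)
  then have "S b = S_closed b"
    using S_closed_pos[of b] \<open>b \<ge> 0\<close> S0_pos by (simp add: S_0 S_closed_0 divide_eq_1_iff)
  moreover have "I b = I0 * (\<tau> + b) / (S0 * \<tau>) * S b"
    using assms by (rule I_proportional_S_while_positive)
  ultimately show ?thesis by (simp add: I_closed_eq)
qed

lemma S_closed_continuous: "continuous_on {0..} S_closed"
proof (rule DERIV_continuous_on)
  fix t :: real assume "t \<in> {0..}"
  then show "(S_closed has_real_derivative - force_of_infection t * S_closed t) (at t within {0..})"
    by (intro has_field_derivative_at_within[OF S_closed_deriv]) simp
qed

lemma I_closed_continuous: "continuous_on {0..} I_closed"
  unfolding I_closed_eq[abs_def] using S_closed_continuous S0_pos tau_pos by (intro continuous_intros) auto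

lemma S_I_pos:
  assumes "t \<ge> 0"
  shows "S t > 0 \<and> I t > 0"
proof -
  have "min (S t) (I t) > 0"
  proof (rule positive_by_continuation[where a = 0 and u = "\<lambda>t. min (S t) (I t)"
        and v = "\<lambda>t. min (S_closed t) (I_closed t)"])
    show "continuous_on {0..} (\<lambda>t. min (S t) (I t))"
      using S_continuous I_continuous by (intro continuous_intros)
    show "continuous_on {0..} (\<lambda>t. min (S_closed t) (I_closed t))"
      using S_closed_continuous I_closed_continuous by (intro continuous_intros)
    show "min (S_closed t) (I_closed t) > 0" if "t \<ge> 0" for t
      using S_closed_pos I_closed_pos that by simp
    show "min (S 0) (I 0) > 0" using S0_pos I0_pos by (simp add: S_0 I_0)
    show "min (S b) (I b) = min (S_closed b) (I_closed b)"
      if "b \<ge> 0" "\<forall>s\<in>{0..b}. min (S s) (I s) > 0" for b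
      using solution_eq_closed_while_positive[of b] that by simp
  qed (rule assms)
  then show ?thesis by simp
qed

lemma solution_eq_closed:
  assumes "t \<ge> 0"
  shows "S t = S_closed t \<and> I t = I_closed t"
  using assms S_I_pos by (intro solution_eq_closed_while_positive) auto

lemma I_deriv_factored:
  assumes "t \<ge> 0"
  shows "(I has_real_derivative
           I t * (S0 * \<tau> - \<alpha> * I0 * (\<tau> + t)\<^sup>2) / ((\<tau> + t) * (S0 * \<tau> + I0 * (\<tau> + t))))
         (at t within {0..})"
proof -
  define v where "v = \<tau> + t"
  define D where "D = S0 * \<tau> + I0 * v"
  have "v > 0" using assms tau_pos by (simp add: v_def)
  then have "D > 0" using S0_pos I0_pos tau_pos by (simp add: D_def add_pos_pos)
  have "S t > 0" using S_I_pos assms by auto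
  have proportional: "I t = I0 * (\<tau> + t) / (S0 * \<tau>) * S t"
    using assms S_I_pos by (intro I_proportional_S_while_positive) auto
  then have "I t = I0 * v / (S0 * \<tau>) * S t" by (simp add: v_def)
  then have S_eq: "S t = S0 * \<tau> / (I0 * v) * I t"
    using \<open>v > 0\<close> S0_pos I0_pos tau_pos by (simp add: field_simps)
  have "force_of_infection t * S t - \<alpha> * I t
      = ((\<alpha> * v + 1) * I0 / D) * (S0 * \<tau> / (I0 * v) * I t) - \<alpha> * I t"
    by (simp only: S_eq force_of_infection_def v_def D_def)
  also have "\<dots> = I t * ((\<alpha> * v + 1) * S0 * \<tau> - \<alpha> * v * D) / (v * D)"
    using \<open>v > 0\<close> \<open>D > 0\<close> I0_pos by (simp add: field_simps)
  also have "(\<alpha> * v + 1) * S0 * \<tau> - \<alpha> * v * D = S0 * \<tau> - \<alpha> * I0 * v\<^sup>2"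
    by (simp add: D_def algebra_simps power2_eq_square)
  finally have factored: "force_of_infection t * S t - \<alpha> * I t
      = I t * (S0 * \<tau> - \<alpha> * I0 * (\<tau> + t)\<^sup>2) / ((\<tau> + t) * (S0 * \<tau> + I0 * (\<tau> + t)))"
    by (simp only: v_def D_def)
  have incidence: "(\<alpha> + 1 / (\<tau> + t)) * S t * I t / (S t + I t) = force_of_infection t * S t"
    using \<open>S t > 0\<close> by (intro incidence_eq_force_of_infection[OF assms _ proportional]) simp
  show ?thesis using I_deriv[OF assms] unfolding incidence factored .
qed

lemma I_le_I_peak:
  assumes "\<alpha> > 0" and tp_nonneg: "\<tau> * (sqrt (S0 / (I0 * \<alpha> * \<tau>)) - 1) \<ge> 0" and "t \<ge> 0"
  shows "I t \<le> I (\<tau> * (sqrt (S0 / (I0 * \<alpha> * \<tau>)) - 1))"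
proof -
  define tp where "tp = \<tau> * (sqrt (S0 / (I0 * \<alpha> * \<tau>)) - 1)"
  have "\<tau> + tp = \<tau> * sqrt (S0 / (I0 * \<alpha> * \<tau>))" by (simp add: tp_def algebra_simps)
  then have "(\<tau> + tp)\<^sup>2 = \<tau>\<^sup>2 * (S0 / (I0 * \<alpha> * \<tau>))"
    using assms S0_pos I0_pos tau_pos by (simp add: power_mult_distrib)
  then have peak: "S0 * \<tau> = \<alpha> * I0 * (\<tau> + tp)\<^sup>2"
    using assms I0_pos tau_pos by (simp add: field_simps power2_eq_square)
  define dI where "dI x = I x * (S0 * \<tau> - \<alpha> * I0 * (\<tau> + x)\<^sup>2) / ((\<tau> + x) * (S0 * \<tau> + I0 * (\<tau> + x)))"
    for x
  have sign: "0 \<le> dI x \<longleftrightarrow> x \<le> tp" if "x \<ge> 0" for x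
  proof -
    define c where "c = \<alpha> * I0 * I x / ((\<tau> + x) * (S0 * \<tau> + I0 * (\<tau> + x)))"
    have "c > 0"
      using S_I_pos[OF that] that \<open>\<alpha> > 0\<close> S0_pos I0_pos tau_pos by (simp add: c_def add_pos_pos)
    have "dI x = c * ((\<tau> + tp)\<^sup>2 - (\<tau> + x)\<^sup>2)"
      unfolding dI_def peak c_def by (simp add: algebra_simps)
    then have "0 \<le> dI x \<longleftrightarrow> (\<tau> + x)\<^sup>2 \<le> (\<tau> + tp)\<^sup>2"
      using \<open>c > 0\<close> by (simp add: zero_le_mult_iff)
    also have "\<dots> \<longleftrightarrow> x \<le> tp"
      using that tp_nonneg tau_pos by (simp add: power_mono_iff tp_def)
    finally show ?thesis .
  qed
  have "0 \<le> tp" using tp_nonneg by (simp add: tp_def)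
  show ?thesis unfolding tp_def[symmetric]
  proof (rule le_at_derivative_sign_change[where a = 0 and f = I and f' = dI])
    show "(I has_real_derivative dI x) (at x within {0..})" if "0 \<le> x" for x
      using I_deriv_factored[OF that] unfolding dI_def .
    show "0 \<le> dI x" if "0 < x" "x < tp" for x using sign[of x] that by simp
    show "dI x \<le> 0" if "tp < x" for x using sign[of x] that \<open>0 \<le> tp\<close> by simp
  qed (use \<open>0 \<le> tp\<close> \<open>t \<ge> 0\<close> in auto)
qed

end

theorem mainTheorem5:
  fixes \<alpha> \<beta>m S0 I0 :: real and S I R :: "real \<Rightarrow> real"
  assumes "\<alpha> > 0" and "\<beta>m > \<alpha>" and "S0 > 0" and "I0 > 0"
    and "S 0 = S0" and "I 0 = I0"
    and "\<forall>t\<ge>0. (S has_real_derivative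
           (- (sir_beta \<alpha> \<beta>m t * S t * I t / (S t + I t)))) (at t within {0..})"
    and "\<forall>t\<ge>0. (I has_real_derivative
           (sir_beta \<alpha> \<beta>m t * S t * I t / (S t + I t) - \<alpha> * I t)) (at t within {0..})"
    and "\<forall>t\<ge>0. (R has_real_derivative (\<alpha> * I t)) (at t within {0..})"
  shows "(\<forall>t\<ge>0.
            S t = S0 * ((S0 + I0) / (S0 + I0 * (1 + t / sir_tau \<alpha> \<beta>m)))
                    powr (1 - S0 / I0 * \<alpha> * sir_tau \<alpha> \<beta>m) * exp (- \<alpha> * t)
          \<and> I t = I0 * (1 + t / sir_tau \<alpha> \<beta>m)
                  * ((S0 + I0) / (S0 + I0 * (1 + t / sir_tau \<alpha> \<beta>m)))
                    powr (1 - S0 / I0 * \<alpha> * sir_tau \<alpha> \<beta>m) * exp (- \<alpha> * t))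
       \<and> (let tp = sir_tau \<alpha> \<beta>m * (sqrt (S0 / (I0 * \<alpha> * sir_tau \<alpha> \<beta>m)) - 1)
          in tp \<ge> 0 \<longrightarrow> (\<forall>t\<ge>0. I t \<le> I tp))"
proof -
  have beta: "sir_beta \<alpha> \<beta>m t = \<alpha> + 1 / (sir_tau \<alpha> \<beta>m + t)" for t
    using \<open>\<beta>m > \<alpha>\<close> by (intro sir_beta_eq) simp
  interpret sir_hyperbolic_solution \<alpha> "sir_tau \<alpha> \<beta>m" S0 I0 S I
  proof unfold_locales
    show "sir_tau \<alpha> \<beta>m > 0" using \<open>\<beta>m > \<alpha>\<close> by (simp add: sir_tau_def)
  qed (use assms in \<open>simp_all add: beta\<close>)
  show ?thesis
    using solution_eq_closed I_le_I_peak \<open>\<alpha> > 0\<close>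
    unfolding S_closed_def I_closed_def Let_def by blast
qed

end
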